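(* Let $s\le 4$. Let $A\subset\mathbb{Z}$ be a finite set with $\dim(A)=1$, and let $s$ be the minimum number of pairwise disjoint segments into which $A$ can be decomposed. If $s\le |A|-1$, then $\mathrm{vol}(A)\le 2^{s-1}(|A|-s)+1$.
   Context: A segment is a nonempty set of consecutive integers. Sets $A\subset G$, $B\subset G'$ in abelian groups are Freiman isomorphic of order 2 ($F_2$-isomorphic) if there is a bijection $\phi:A\to B$ with $x+y=z+t \iff \phi(x)+\phi(y)=\phi(z)+\phi(t)$ for all $x,y,z,t\in A$. The dimension $\dim(A)$ of a finite $A\subset\mathbb{Z}$ is the largest $d$ such that some $B\subset\mathbb{Z}^d$ not contained in a hyperplane is $F_2$-isomorphic to $A$. The volume $\mathrm{vol}(A)$ of a $d$-dimensional set $A$ is the minimum cardinality of $\mathrm{conv}(B)\cap\mathbb{Z}^d$ over all $B\subset\mathbb{Z}^d$ $F_2$-isomorphic to $A$; for $1$-dimensional $A$ this equals $\max(\tilde A)+1$ where $\tilde A=(A-\min A)/\gcd(A-\min A)$. *)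

theory Defs
  imports Complex_Main "HOL-Library.Function_Algebras"
begin

definition f2_iso :: "'a::ab_group_add set \<Rightarrow> 'b::ab_group_add set \<Rightarrow> bool" where
  "f2_iso A B \<longleftrightarrow> (\<exists>\<phi>. bij_betw \<phi> A B \<and>
     (\<forall>x\<in>A. \<forall>y\<in>A. \<forall>z\<in>A. \<forall>t\<in>A.
        x + y = z + t \<longleftrightarrow> \<phi> x + \<phi> y = \<phi> z + \<phi> t))"

(* Z^d, represented as integer functions on nat vanishing outside {..<d} *)
definition zvec :: "nat \<Rightarrow> (nat \<Rightarrow> int) set" where
  "zvec d = {x. \<forall>i\<ge>d. x i = 0}"

definition in_hyperplane :: "nat \<Rightarrow> (nat \<Rightarrow> int) set \<Rightarrow> bool" where
  "in_hyperplane d B \<longleftrightarrow> (\<exists>(c::nat \<Rightarrow> real) (b::real). (\<exists>i<d. c i \<noteq> 0) \<and>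
     (\<forall>x\<in>B. (\<Sum>i<d. c i * real_of_int (x i)) = b))"

definition fdim :: "int set \<Rightarrow> nat" where
  "fdim A = (GREATEST d. \<exists>B. B \<subseteq> zvec d \<and> f2_iso A B \<and> \<not> in_hyperplane d B)"

(* conv(B) \<inter> Z^d *)
definition lattice_conv :: "nat \<Rightarrow> (nat \<Rightarrow> int) set \<Rightarrow> (nat \<Rightarrow> int) set" where
  "lattice_conv d B = {p \<in> zvec d. \<exists>S (u :: (nat \<Rightarrow> int) \<Rightarrow> real).
      finite S \<and> S \<subseteq> B \<and> (\<forall>x\<in>S. u x \<ge> 0) \<and> sum u S = 1 \<and>
      (\<forall>i. real_of_int (p i) = (\<Sum>x\<in>S. u x * real_of_int (x i)))}"

definition fvol :: "int set \<Rightarrow> nat" where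
  "fvol A = (INF B \<in> {B. B \<subseteq> zvec (fdim A) \<and> f2_iso A B}. card (lattice_conv (fdim A) B))"

definition segment :: "int set \<Rightarrow> bool" where
  "segment S \<longleftrightarrow> S \<noteq> {} \<and> (\<exists>a b. S = {a..b})"

definition seg_num :: "int set \<Rightarrow> nat" where
  "seg_num A = (LEAST k. \<exists>P. finite P \<and> card P = k \<and> (\<forall>S\<in>P. segment S) \<and>
      pairwise disjnt P \<and> \<Union>P = A)"

end

theory Submission
  imports Defs
begin

(*
  Write A as s sorted disjoint segments [a_j, b_j]. For a labelling c of the segments, the map
  x \<mapsto> (x, c(segment of x)) is a Freiman isomorphism of order 2 as soon as c_i + c_j = c_k + c_l
  whenever the sumsets [a_i, b_i] + [a_j, b_j] and [a_k, b_k] + [a_l, b_l] meet. If some segment has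
  two points and c is not constant, the image is not contained in a line, so dim A = 1 forces every
  non-constant labelling to violate one of these relations. For s \<le> 4, finitely many labellings
  turn this into a system of linear inequalities on the endpoints which bounds the diameter
  b_(s-1) - a_0 by 2^(s-1) (|A| - s); and the volume of a one-dimensional set is at most its
  diameter plus one, as the set is Freiman isomorphic to itself on a coordinate axis.
*)

lemma vector_space_fun: "vector_space (\<lambda>(r::real) (f::'x \<Rightarrow> real) x. r * f x)"
  by unfold_locales (auto simp: fun_eq_iff algebra_simps)

lemma sum_fun_apply: "(\<Sum>i\<in>I. f i) x = (\<Sum>i\<in>I. f i x :: 'b::comm_monoid_add)"
  by (induction I rule: infinite_finite_induct) auto

lemma inj_on_restrict_if_independent:
  fixes F :: "nat \<Rightarrow> 'x \<Rightarrow> real"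
  assumes independent: "\<And>c. \<forall>x\<in>B. (\<Sum>i<m. c i * F i x) = 0 \<Longrightarrow> \<forall>i<m. c i = 0"
  shows "inj_on (\<lambda>i x. if x \<in> B then F i x else 0) {..<m}"
proof (rule inj_onI, rule ccontr)
  fix i j assume ij: "i \<in> {..<m}" "j \<in> {..<m}" "i \<noteq> j"
    and eq: "(\<lambda>x. if x \<in> B then F i x else 0) = (\<lambda>x. if x \<in> B then F j x else 0)"
  define c where "c k = (if k = i then 1 else if k = j then -1 else 0 :: real)" for k
  have "(\<Sum>k<m. c k * F k x) = F i x - F j x" for x
  proof -
    have "(\<Sum>k<m. c k * F k x) = (\<Sum>k<m. (if k = i then F i x else 0) + (if k = j then - F j x else 0))"
      by (rule sum.cong) (auto simp: c_def \<open>i \<noteq> j\<close>)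
    then show ?thesis using ij by (simp add: sum.distrib)
  qed
  moreover have "F i x = F j x" if "x \<in> B" for x
    using fun_cong[OF eq, of x] that by simp
  ultimately have "c i = 0" using independent[of c] ij(1) by auto
  then show False by (simp add: c_def)
qed

(* The restrictions of the F i to B are independent and lie in the span of the |B| point indicators. *)
lemma independent_functions_le_card:
  fixes B :: "'x set" and F :: "nat \<Rightarrow> 'x \<Rightarrow> real"
  assumes "finite B"
    and independent: "\<And>c. \<forall>x\<in>B. (\<Sum>i<m. c i * F i x) = 0 \<Longrightarrow> \<forall>i<m. c i = 0"
  shows "m \<le> card B"
proof -
  interpret fun_space: vector_space "\<lambda>(r::real) (f::'x \<Rightarrow> real) x. r * f x"
    by (rule vector_space_fun)
  define G where "G = (\<lambda>i x. if x \<in> B then F i x else 0)"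
  define \<delta> where "\<delta> y x = (if x = y then 1 else 0 :: real)" for y x :: 'x
  have inj: "inj_on G {..<m}"
    unfolding G_def using independent by (rule inj_on_restrict_if_independent)
  have "fun_space.independent (G ` {..<m})"
  proof (rule fun_space.independent_if_scalars_zero)
    fix f v assume sum0: "(\<Sum>g\<in>G ` {..<m}. (\<lambda>x. f g * g x)) = 0" and "v \<in> G ` {..<m}"
    have "(\<Sum>i<m. (\<lambda>x. f (G i) * G i x)) = (\<Sum>g\<in>G ` {..<m}. (\<lambda>x. f g * g x))"
      by (simp add: sum.reindex[OF inj])
    also have "\<dots> = 0" by (rule sum0)
    finally have "(\<Sum>i<m. (\<lambda>x. f (G i) * G i x)) = 0" .
    then have "(\<Sum>i<m. (\<lambda>x. f (G i) * G i x)) x = 0" for x by simp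
    then have vanish: "(\<Sum>i<m. f (G i) * G i x) = 0" for x by (simp only: sum_fun_apply)
    have "(\<Sum>i<m. f (G i) * F i x) = 0" if "x \<in> B" for x
    proof -
      have "(\<Sum>i<m. f (G i) * F i x) = (\<Sum>i<m. f (G i) * G i x)" using that by (simp add: G_def)
      also have "\<dots> = 0" by (rule vanish)
      finally show ?thesis .
    qed
    then have "\<forall>i<m. f (G i) = 0" using independent[of "\<lambda>i. f (G i)"] by blast
    then show "f v = 0" using \<open>v \<in> G ` {..<m}\<close> by auto
  qed simp
  moreover have "G ` {..<m} \<subseteq> fun_space.span (\<delta> ` B)"
  proof clarify
    fix i
    have "G i = (\<Sum>y\<in>B. (\<lambda>x. F i y * \<delta> y x))"
      using \<open>finite B\<close> by (auto simp: fun_eq_iff sum_fun_apply G_def \<delta>_def if_distrib cong: if_cong)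
    also have "\<dots> \<in> fun_space.span (\<delta> ` B)"
      by (intro fun_space.span_sum fun_space.span_scale fun_space.span_base) auto
    finally show "G i \<in> fun_space.span (\<delta> ` B)" .
  qed
  ultimately have "card (G ` {..<m}) \<le> card (\<delta> ` B)"
    using fun_space.independent_span_bound \<open>finite B\<close> by blast
  also have "\<dots> \<le> card B" by (rule card_image_le[OF \<open>finite B\<close>])
  finally show ?thesis by (simp add: card_image[OF inj])
qed

lemma card_gt_if_not_in_hyperplane:
  assumes "finite B" and "B \<noteq> {}" and "\<not> in_hyperplane d B"
  shows "d < card B"
proof -
  define F where "F i p = (if i < d then real_of_int (p i) else 1)" for i and p :: "nat \<Rightarrow> int"
  have "Suc d \<le> card B"
  proof (rule independent_functions_le_card[OF \<open>finite B\<close>])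
    fix c :: "nat \<Rightarrow> real"
    assume "\<forall>x\<in>B. (\<Sum>i<Suc d. c i * F i x) = 0"
    then have on_plane: "\<forall>x\<in>B. (\<Sum>i<d. c i * real_of_int (x i)) = - c d"
      by (simp add: F_def eq_neg_iff_add_eq_0)
    then have "\<forall>i<d. c i = 0"
      using \<open>\<not> in_hyperplane d B\<close> unfolding in_hyperplane_def by blast
    moreover have "c d = 0"
      using on_plane \<open>\<forall>i<d. c i = 0\<close> \<open>B \<noteq> {}\<close> by auto
    ultimately show "\<forall>i<Suc d. c i = 0" by (auto simp: less_Suc_eq)
  qed
  then show ?thesis by simp
qed

lemma le_fdim:
  assumes "finite A" and "B \<subseteq> zvec d" and "f2_iso A B" and "\<not> in_hyperplane d B"
  shows "d \<le> fdim A"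
  unfolding fdim_def
proof (rule Greatest_le_nat[where b = "card A"])
  show "\<exists>B. B \<subseteq> zvec d \<and> f2_iso A B \<and> \<not> in_hyperplane d B" using assms by blast
  fix d' assume "\<exists>B. B \<subseteq> zvec d' \<and> f2_iso A B \<and> \<not> in_hyperplane d' B"
  then obtain B' where "f2_iso A B'" and "\<not> in_hyperplane d' B'" by blast
  then obtain \<phi> where \<phi>: "bij_betw \<phi> A B'" unfolding f2_iso_def by (elim exE conjE)
  have "finite B'" using bij_betw_finite[OF \<phi>] \<open>finite A\<close> by simp
  have "card B' = card A" using bij_betw_same_card[OF \<phi>] by simp
  show "d' \<le> card A"
  proof (cases "B' = {}")
    case True
    have "in_hyperplane d' B'" if "0 < d'"
      unfolding in_hyperplane_def True using that by (intro exI[of _ "\<lambda>_. 1"] exI[of _ 0]) auto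
    with \<open>\<not> in_hyperplane d' B'\<close> have "\<not> 0 < d'" by blast
    then show ?thesis by simp
  next
    case False
    with card_gt_if_not_in_hyperplane \<open>finite B'\<close> \<open>\<not> in_hyperplane d' B'\<close>
    have "d' < card B'" by blast
    then show ?thesis using \<open>card B' = card A\<close> by simp
  qed
qed

definition zpair :: "int \<Rightarrow> int \<Rightarrow> nat \<Rightarrow> int" where
  "zpair x y = (\<lambda>i. if i = 0 then x else if i = 1 then y else 0)"

lemma zpair_add: "zpair x y + zpair x' y' = zpair (x + x') (y + y')"
  by (auto simp: zpair_def fun_eq_iff)

lemma zpair_eq_iff: "zpair x y = zpair x' y' \<longleftrightarrow> x = x' \<and> y = y'"
  by (auto simp: zpair_def fun_eq_iff dest: spec[of _ 0] spec[of _ 1])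

lemma zpair_in_zvec: "zpair x y \<in> zvec 2" "zpair x 0 \<in> zvec 1"
  by (auto simp: zpair_def zvec_def)

lemma f2_iso_graph:
  assumes "\<And>x y z t. x \<in> A \<Longrightarrow> y \<in> A \<Longrightarrow> z \<in> A \<Longrightarrow> t \<in> A \<Longrightarrow> x + y = z + t \<Longrightarrow>
    g x + g y = g z + g t"
  shows "f2_iso A ((\<lambda>x. zpair x (g x)) ` A)"
  unfolding f2_iso_def
proof (intro exI[of _ "\<lambda>x. zpair x (g x)"] conjI ballI)
  have "inj_on (\<lambda>x. zpair x (g x)) A"
    by (rule inj_onI) (simp add: zpair_eq_iff)
  then show "bij_betw (\<lambda>x. zpair x (g x)) A ((\<lambda>x. zpair x (g x)) ` A)"
    by (rule inj_on_imp_bij_betw)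
  fix x y z t assume "x \<in> A" "y \<in> A" "z \<in> A" "t \<in> A"
  have "zpair x (g x) + zpair y (g y) = zpair z (g z) + zpair t (g t) \<longleftrightarrow>
      x + y = z + t \<and> g x + g y = g z + g t"
    by (simp add: zpair_add zpair_eq_iff)
  then show "x + y = z + t \<longleftrightarrow> zpair x (g x) + zpair y (g y) = zpair z (g z) + zpair t (g t)"
    using assms[OF \<open>x \<in> A\<close> \<open>y \<in> A\<close> \<open>z \<in> A\<close> \<open>t \<in> A\<close>] by blast
qed

lemma convex_combination_le:
  fixes f u :: "'a \<Rightarrow> real"
  assumes "\<forall>x\<in>S. 0 \<le> u x" and "sum u S = 1" and "\<forall>x\<in>S. f x \<le> U"
  shows "(\<Sum>x\<in>S. u x * f x) \<le> U"
proof -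
  have "(\<Sum>x\<in>S. u x * f x) \<le> (\<Sum>x\<in>S. u x * U)"
    using assms(1,3) by (intro sum_mono mult_left_mono) auto
  also have "\<dots> = U" using assms(2) by (simp add: sum_distrib_right[symmetric])
  finally show ?thesis .
qed

lemma lattice_conv_axis_subset:
  assumes "B \<subseteq> (\<lambda>x. zpair x 0) ` {L..U}"
  shows "lattice_conv 1 B \<subseteq> (\<lambda>x. zpair x 0) ` {L..U}"
proof
  fix p assume "p \<in> lattice_conv 1 B"
  then obtain S u where "p \<in> zvec 1" and "S \<subseteq> B" and "\<forall>x\<in>S. 0 \<le> u x" and "sum u S = 1"
    and p: "real_of_int (p 0) = (\<Sum>x\<in>S. u x * real_of_int (x 0))"
    unfolding lattice_conv_def by blast
  have "\<forall>x\<in>S. L \<le> x 0 \<and> x 0 \<le> U"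
  proof
    fix x assume "x \<in> S"
    then obtain y where "y \<in> {L..U}" and "x = zpair y 0" using \<open>S \<subseteq> B\<close> assms by blast
    then show "L \<le> x 0 \<and> x 0 \<le> U" by (simp add: zpair_def)
  qed
  then have "p 0 \<le> U" and "- p 0 \<le> - L"
    using convex_combination_le[of S u "\<lambda>x. real_of_int (x 0)" U]
      convex_combination_le[of S u "\<lambda>x. - real_of_int (x 0)" "- L"]
      \<open>\<forall>x\<in>S. 0 \<le> u x\<close> \<open>sum u S = 1\<close> p
    by (simp_all add: sum_negf)
  moreover have "p = zpair (p 0) 0"
    using \<open>p \<in> zvec 1\<close> by (auto simp: zvec_def zpair_def fun_eq_iff)
  ultimately show "p \<in> (\<lambda>x. zpair x 0) ` {L..U}" by force
qed

lemma fvol_le_diameter: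
  assumes "fdim A = 1" and "A \<subseteq> {L..U}"
  shows "fvol A \<le> nat (U - L + 1)"
proof -
  define B where "B = (\<lambda>x. zpair x 0) ` A"
  have "f2_iso A B" unfolding B_def using f2_iso_graph[of A "\<lambda>_. 0"] by simp
  moreover have "B \<subseteq> zvec 1" using zpair_in_zvec by (auto simp: B_def)
  ultimately have "fvol A \<le> card (lattice_conv 1 B)"
    unfolding fvol_def \<open>fdim A = 1\<close> by (intro cINF_lower bdd_belowI[of _ 0]) auto
  also have "\<dots> \<le> card ((\<lambda>x. zpair x 0) ` {L..U})"
    using lattice_conv_axis_subset[of B L U] \<open>A \<subseteq> {L..U}\<close> unfolding B_def
    by (intro card_mono) auto
  also have "\<dots> \<le> nat (U - L + 1)" using card_image_le[of "{L..U}"] by simp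
  finally show ?thesis .
qed

definition sorted_segments :: "nat \<Rightarrow> (nat \<Rightarrow> int) \<Rightarrow> (nat \<Rightarrow> int) \<Rightarrow> bool" where
  "sorted_segments s a b \<longleftrightarrow> (\<forall>j<s. a j \<le> b j) \<and> (\<forall>j. Suc j < s \<longrightarrow> b j < a (Suc j))"

lemma sorted_segments_less:
  assumes "sorted_segments s a b" and "i < k" and "k < s"
  shows "b i < a k"
  using assms(2,3)
proof (induction k)
  case (Suc k)
  have "b i \<le> b k"
  proof (cases "i = k")
    case False
    then have "b i < a k" using Suc by simp
    moreover have "a k \<le> b k" using assms(1) Suc.prems unfolding sorted_segments_def by simp
    ultimately show ?thesis by simp
  qed simp
  moreover have "b k < a (Suc k)" using assms(1) Suc.prems unfolding sorted_segments_def by simp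
  ultimately show ?case by simp
qed simp

lemma sorted_segments_mono:
  assumes "sorted_segments s a b" and "i \<le> k" and "k < s"
  shows "a i \<le> a k" and "b i \<le> b k"
proof -
  have "a i \<le> a k \<and> b i \<le> b k"
  proof (cases "i = k")
    case False
    then have "b i < a k" using sorted_segments_less assms by simp
    moreover have "a i \<le> b i" "a k \<le> b k" using assms unfolding sorted_segments_def by simp_all
    ultimately show ?thesis by simp
  qed simp
  then show "a i \<le> a k" and "b i \<le> b k" by simp_all
qed

lemma sorted_segments_disjoint:
  assumes "sorted_segments s a b" and "i < s" and "j < s" and "i \<noteq> j"
  shows "{a i..b i} \<inter> {a j..b j} = {}"
proof (cases "i < j")
  case True
  then have "b i < a j" using sorted_segments_less assms by blast
  then show ?thesis by auto
next
  case False
  then have "b j < a i" using sorted_segments_less assms by (metis linorder_neqE_nat)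
  then show ?thesis by auto
qed

lemma card_sorted_segments:
  assumes "sorted_segments s a b"
  shows "int (card (\<Union>j<s. {a j..b j})) = (\<Sum>j<s. b j - a j) + int s"
proof -
  have "card (\<Union>j<s. {a j..b j}) = (\<Sum>j<s. card {a j..b j})"
    by (rule card_UN_disjoint) (use sorted_segments_disjoint[OF assms] in auto)
  then have "int (card (\<Union>j<s. {a j..b j})) = (\<Sum>j<s. int (card {a j..b j}))"
    by simp
  also have "\<dots> = (\<Sum>j<s. b j - a j + 1)"
    by (rule sum.cong) (use assms in \<open>auto simp: sorted_segments_def\<close>)
  also have "\<dots> = (\<Sum>j<s. b j - a j) + int s"
    by (simp add: sum.distrib)
  finally show ?thesis .
qed

lemma sorted_segments_subset:
  assumes "sorted_segments s a b"
  shows "(\<Union>j<s. {a j..b j}) \<subseteq> {a 0..b (s - 1)}"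
proof
  fix x assume "x \<in> (\<Union>j<s. {a j..b j})"
  then obtain j where "j < s" and "a j \<le> x" and "x \<le> b j" by auto
  moreover have "a 0 \<le> a j" using sorted_segments_mono(1)[OF assms, of 0 j] \<open>j < s\<close> by simp
  moreover have "b j \<le> b (s - 1)" using sorted_segments_mono(2)[OF assms, of j "s - 1"] \<open>j < s\<close> by simp
  ultimately show "x \<in> {a 0..b (s - 1)}" by simp
qed

lemma segment_eq_Min_Max:
  assumes "segment S"
  shows "S = {Min S..Max S}" and "Min S \<le> Max S" and "x \<in> S \<longleftrightarrow> Min S \<le> x \<and> x \<le> Max S"
proof -
  obtain l u where S: "S = {l..u}" and "l \<le> u" using assms unfolding segment_def by fastforce
  have "Min S = l" unfolding S by (rule Min_eqI) (use \<open>l \<le> u\<close> in auto)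
  moreover have "Max S = u" unfolding S by (rule Max_eqI) (use \<open>l \<le> u\<close> in auto)
  ultimately show "S = {Min S..Max S}" and "Min S \<le> Max S"
    and "x \<in> S \<longleftrightarrow> Min S \<le> x \<and> x \<le> Max S" using S \<open>l \<le> u\<close> by simp_all
qed

lemma disjnt_segment_less_Min:
  assumes "segment S" and "segment T" and "disjnt S T" and "Min T \<le> Min S" and "x \<in> T"
  shows "x < Min S"
proof (rule ccontr)
  assume "\<not> x < Min S"
  then have "Min S \<in> T" using assms(4,5) segment_eq_Min_Max(3)[OF assms(2)] by auto
  moreover have "Min S \<in> S" using segment_eq_Min_Max(2,3)[OF assms(1)] by auto
  ultimately show False using \<open>disjnt S T\<close> by (auto simp: disjnt_def)
qed

lemma sorted_segments_snoc:
  assumes "sorted_segments n a b" and "l \<le> u" and "\<forall>j<n. b j < l"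
  shows "sorted_segments (Suc n) (a(n := l)) (b(n := u))"
  unfolding sorted_segments_def
proof (intro conjI allI impI)
  fix j assume "j < Suc n"
  then show "(a(n := l)) j \<le> (b(n := u)) j"
    using assms(1,2) unfolding sorted_segments_def by (cases "j = n") auto
next
  fix j assume "Suc j < Suc n"
  show "(b(n := u)) j < (a(n := l)) (Suc j)"
  proof (cases "Suc j = n")
    case True
    then show ?thesis using assms(3) by simp
  next
    case False
    then show ?thesis using assms(1) \<open>Suc j < Suc n\<close> unfolding sorted_segments_def by simp
  qed
qed

lemma sorted_segments_of_disjoint:
  assumes "finite P" and "\<forall>S\<in>P. segment S" and "pairwise disjnt P"
  shows "\<exists>a b. sorted_segments (card P) a b \<and> P = (\<lambda>j. {a j..b j}) ` {..<card P}"
  using assms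
proof (induction "card P" arbitrary: P)
  case 0
  then have "P = {}" by simp
  then show ?case by (simp add: sorted_segments_def)
next
  case (Suc n)
  have seg: "segment T" if "T \<in> P" for T using Suc.prems(2) that by blast
  have "P \<noteq> {}" using Suc.hyps(2) by auto
  then have "Max (Min ` P) \<in> Min ` P" using \<open>finite P\<close> by simp
  then obtain S where "S \<in> P" and "Min S = Max (Min ` P)" by auto
  then have S_max: "Min T \<le> Min S" if "T \<in> P" for T using \<open>finite P\<close> that by simp
  define P' where "P' = P - {S}"
  have "n = card P'" using Suc.hyps(2) \<open>S \<in> P\<close> \<open>finite P\<close> by (simp add: P'_def)
  moreover have "finite P'" and "\<forall>T\<in>P'. segment T" and "pairwise disjnt P'"
    using Suc.prems pairwise_subset[of disjnt P P'] by (auto simp: P'_def)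
  ultimately obtain a b where ab: "sorted_segments n a b" and P': "P' = (\<lambda>j. {a j..b j}) ` {..<n}"
    using Suc.hyps(1) by blast
  have "b j < Min S" if "j < n" for j
  proof -
    have "{a j..b j} \<in> P'" and "b j \<in> {a j..b j}" using P' ab that unfolding sorted_segments_def by auto
    then have "{a j..b j} \<in> P" and "disjnt S {a j..b j}"
      using pairwiseD[OF Suc.prems(3) \<open>S \<in> P\<close>] by (auto simp: P'_def)
    then show ?thesis
      using disjnt_segment_less_Min seg \<open>S \<in> P\<close> S_max \<open>b j \<in> {a j..b j}\<close> by blast
  qed
  then have "sorted_segments (Suc n) (a(n := Min S)) (b(n := Max S))"
    using sorted_segments_snoc[OF ab] segment_eq_Min_Max(2)[OF seg[OF \<open>S \<in> P\<close>]] by blast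
  moreover have "P = (\<lambda>j. {(a(n := Min S)) j..(b(n := Max S)) j}) ` {..<Suc n}"
  proof -
    have "(\<lambda>j. {(a(n := Min S)) j..(b(n := Max S)) j}) ` {..<n} = P'"
      unfolding P' by (rule image_cong) auto
    moreover have "{Min S..Max S} = S" using segment_eq_Min_Max(1)[OF seg[OF \<open>S \<in> P\<close>], symmetric] .
    ultimately show ?thesis
      unfolding lessThan_Suc image_insert using \<open>S \<in> P\<close> by (simp add: P'_def insert_absorb)
  qed
  ultimately show ?case unfolding Suc.hyps(2)[symmetric] by blast
qed

lemma seg_num_decomposition:
  assumes "finite A"
  obtains a b where "sorted_segments (seg_num A) a b" and "A = (\<Union>j<seg_num A. {a j..b j})"
proof -
  let ?decomposes = "\<lambda>k P. finite P \<and> card P = k \<and> (\<forall>S\<in>P. segment S) \<and> pairwise disjnt P \<and> \<Union>P = A"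
  have "segment {x}" for x
    unfolding segment_def by (metis atLeastAtMost_singleton insert_not_empty)
  moreover have "card ((\<lambda>x. {x}) ` A) = card A"
    by (rule card_image) (auto simp: inj_on_def)
  ultimately have "?decomposes (card A) ((\<lambda>x. {x}) ` A)"
    using \<open>finite A\<close> by (auto simp: pairwise_def disjnt_def)
  then have "\<exists>P. ?decomposes (seg_num A) P"
    unfolding seg_num_def by (rule LeastI[of "\<lambda>k. \<exists>P. ?decomposes k P", OF exI])
  then obtain P where "finite P" and card_P: "card P = seg_num A" and "\<forall>S\<in>P. segment S"
    and "pairwise disjnt P" and P_A: "\<Union>P = A"
    by (elim exE conjE)
  obtain a b where "sorted_segments (card P) a b" and P_eq: "P = (\<lambda>j. {a j..b j}) ` {..<card P}"
    using sorted_segments_of_disjoint[OF \<open>finite P\<close> \<open>\<forall>S\<in>P. segment S\<close> \<open>pairwise disjnt P\<close>]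
    by (elim exE conjE)
  show ?thesis
  proof (rule that)
    show "sorted_segments (seg_num A) a b" using \<open>sorted_segments (card P) a b\<close> card_P by simp
    show "A = (\<Union>j<seg_num A. {a j..b j})" using P_A P_eq card_P by simp
  qed
qed

definition segment_index :: "(nat \<Rightarrow> int) \<Rightarrow> int \<Rightarrow> nat" where
  "segment_index b x = (LEAST j. x \<le> b j)"

lemma segment_index_eq:
  assumes "sorted_segments s a b" and "j < s" and "a j \<le> x" and "x \<le> b j"
  shows "segment_index b x = j"
  unfolding segment_index_def
proof (rule Least_equality)
  fix i assume "x \<le> b i"
  show "j \<le> i"
  proof (rule ccontr)
    assume "\<not> j \<le> i"
    then have "b i < a j" using sorted_segments_less[OF assms(1)] assms(2) by simp
    with \<open>x \<le> b i\<close> \<open>a j \<le> x\<close> show False by simp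
  qed
qed fact

lemma segment_index_mem:
  assumes "sorted_segments s a b" and "x \<in> (\<Union>j<s. {a j..b j})"
  shows "segment_index b x < s" and "a (segment_index b x) \<le> x" and "x \<le> b (segment_index b x)"
  using segment_index_eq[OF assms(1)] assms(2) by auto

(* The sumsets {a i..b i} + {a j..b j} and {a k..b k} + {a l..b l} meet iff both inequalities hold. *)
definition respects_sums :: "nat \<Rightarrow> (nat \<Rightarrow> int) \<Rightarrow> (nat \<Rightarrow> int) \<Rightarrow> (nat \<Rightarrow> int) \<Rightarrow> bool" where
  "respects_sums s a b c \<longleftrightarrow> (\<forall>i<s. \<forall>j<s. \<forall>k<s. \<forall>l<s.
     a i + a j \<le> b k + b l \<longrightarrow> a k + a l \<le> b i + b j \<longrightarrow> c i + c j = c k + c l)"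

definition rigid_segments :: "nat \<Rightarrow> (nat \<Rightarrow> int) \<Rightarrow> (nat \<Rightarrow> int) \<Rightarrow> bool" where
  "rigid_segments s a b \<longleftrightarrow> (\<forall>c. respects_sums s a b c \<longrightarrow> (\<forall>j<s. c j = c 0))"

lemma f2_iso_labelled_graph:
  assumes "sorted_segments s a b" and "respects_sums s a b c"
  shows "f2_iso (\<Union>j<s. {a j..b j}) ((\<lambda>x. zpair x (c (segment_index b x))) ` (\<Union>j<s. {a j..b j}))"
proof (rule f2_iso_graph)
  let ?A = "\<Union>j<s. {a j..b j}"
  fix x y z t assume "x \<in> ?A" "y \<in> ?A" "z \<in> ?A" "t \<in> ?A" and "x + y = z + t"
  let ?i = "segment_index b x" and ?j = "segment_index b y"
    and ?k = "segment_index b z" and ?l = "segment_index b t"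
  note mem = segment_index_mem[OF assms(1)]
  have "a ?i + a ?j \<le> b ?k + b ?l" and "a ?k + a ?l \<le> b ?i + b ?j"
    using mem(2,3)[OF \<open>x \<in> ?A\<close>] mem(2,3)[OF \<open>y \<in> ?A\<close>] mem(2,3)[OF \<open>z \<in> ?A\<close>]
      mem(2,3)[OF \<open>t \<in> ?A\<close>] \<open>x + y = z + t\<close>
    by linarith+
  then show "c ?i + c ?j = c ?k + c ?l"
    using assms(2) mem(1)[OF \<open>x \<in> ?A\<close>] mem(1)[OF \<open>y \<in> ?A\<close>] mem(1)[OF \<open>z \<in> ?A\<close>]
      mem(1)[OF \<open>t \<in> ?A\<close>]
    unfolding respects_sums_def by blast
qed

lemma in_hyperplane_graph_const:
  assumes "in_hyperplane 2 ((\<lambda>x. zpair x (g x)) ` A)"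
    and "x \<in> A" and "x + 1 \<in> A" and "g (x + 1) = g x" and "y \<in> A"
  shows "g y = g x"
proof -
  obtain c :: "nat \<Rightarrow> real" and d where "\<exists>i<2. c i \<noteq> 0"
    and plane: "\<forall>p\<in>(\<lambda>x. zpair x (g x)) ` A. (\<Sum>i<2. c i * real_of_int (p i)) = d"
    using assms(1) unfolding in_hyperplane_def by blast
  have line: "c 0 * real_of_int u + c 1 * real_of_int (g u) = d" if "u \<in> A" for u
    using plane that by (simp add: zpair_def numeral_2_eq_2)
  have "c 0 = 0"
    using line[OF \<open>x \<in> A\<close>] line[OF \<open>x + 1 \<in> A\<close>] \<open>g (x + 1) = g x\<close> by (simp add: algebra_simps)
  then have "c 1 \<noteq> 0" using \<open>\<exists>i<2. c i \<noteq> 0\<close> by (auto simp: numeral_2_eq_2 less_Suc_eq)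
  moreover have "c 1 * real_of_int (g y) = c 1 * real_of_int (g x)"
    using line[OF \<open>x \<in> A\<close>] line[OF \<open>y \<in> A\<close>] \<open>c 0 = 0\<close> by simp
  ultimately show ?thesis by simp
qed

lemma long_segment_if_card_gt:
  assumes "sorted_segments s a b" and "s < card (\<Union>j<s. {a j..b j})"
  obtains j where "j < s" and "a j < b j"
proof -
  have "\<not> (\<forall>j<s. b j - a j = 0)"
  proof
    assume "\<forall>j<s. b j - a j = 0"
    then have "(\<Sum>j<s. b j - a j) = 0" by simp
    then show False using card_sorted_segments[OF assms(1)] assms(2) by simp
  qed
  then obtain j where "j < s" and "b j - a j \<noteq> 0" by blast
  moreover have "a j \<le> b j" using assms(1) \<open>j < s\<close> unfolding sorted_segments_def by simp
  ultimately show ?thesis using that by simp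
qed

lemma rigid_if_fdim_one:
  assumes seg: "sorted_segments s a b" and dim: "fdim (\<Union>j<s. {a j..b j}) = 1"
    and "s < card (\<Union>j<s. {a j..b j})"
  shows "rigid_segments s a b"
  unfolding rigid_segments_def
proof (intro allI impI)
  let ?A = "\<Union>j<s. {a j..b j}"
  fix c j assume "respects_sums s a b c" and "j < s"
  let ?g = "\<lambda>x. c (segment_index b x)"
  obtain j0 where "j0 < s" and "a j0 < b j0"
    using long_segment_if_card_gt[OF seg \<open>s < card ?A\<close>] by blast
  have iso: "f2_iso ?A ((\<lambda>x. zpair x (?g x)) ` ?A)"
    by (rule f2_iso_labelled_graph[OF seg \<open>respects_sums s a b c\<close>])
  have plane: "in_hyperplane 2 ((\<lambda>x. zpair x (?g x)) ` ?A)"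
  proof (rule ccontr)
    assume "\<not> in_hyperplane 2 ((\<lambda>x. zpair x (?g x)) ` ?A)"
    then have "2 \<le> fdim ?A" by (intro le_fdim[OF _ _ iso]) (auto simp: zpair_in_zvec)
    with dim show False by simp
  qed
  have start_in: "a i \<in> ?A" if "i < s" for i
    using that seg unfolding sorted_segments_def by (auto intro!: bexI[of _ i])
  have "a j0 + 1 \<in> ?A" using \<open>j0 < s\<close> \<open>a j0 < b j0\<close> by (auto intro!: bexI[of _ j0])
  moreover have "?g (a j0 + 1) = ?g (a j0)"
    using segment_index_eq[OF seg \<open>j0 < s\<close>] \<open>a j0 < b j0\<close> by simp
  ultimately have "?g (a i) = ?g (a j0)" if "i < s" for i
    using in_hyperplane_graph_const[OF plane start_in[OF \<open>j0 < s\<close>]] start_in[OF that] by blast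
  moreover have "?g (a i) = c i" if "i < s" for i
    using segment_index_eq[OF seg that] seg that unfolding sorted_segments_def by simp
  ultimately have same: "c i = ?g (a j0)" if "i < s" for i using that by metis
  show "c j = c 0" using same[of j] same[of 0] \<open>j < s\<close> by simp
qed

lemma not_respects_sums_if_rigid:
  assumes "rigid_segments s a b" and "j < s" and "c j \<noteq> c 0"
  shows "\<not> respects_sums s a b c"
  using assms unfolding rigid_segments_def by blast

(*
  Every labelling listed below is non-constant, so rigidity refutes respects_sums for it; unfolded,
  these refutations are disjunctions of linear constraints on the endpoints that together imply
  the bound.
*)
lemma rigid_segments_diameter_le_2:
  assumes "sorted_segments 2 a b" and "rigid_segments 2 a b"
  shows "b 1 - a 0 \<le> 2 * (\<Sum>j<2. b j - a j)"
proof -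
  have "\<not> respects_sums 2 a b ((!) [0, 1])"
    using not_respects_sums_if_rigid[OF assms(2), of 1] by simp
  with assms(1) show ?thesis
    unfolding sorted_segments_def respects_sums_def by (simp add: numeral_eq_Suc All_less_Suc) smt
qed

lemma rigid_segments_diameter_le_3:
  assumes "sorted_segments 3 a b" and "rigid_segments 3 a b"
  shows "b 2 - a 0 \<le> 4 * (\<Sum>j<3. b j - a j)"
proof -
  have "\<forall>c\<in>set [[0, -1, -2], [0, -1, -1], [0, -1, 0], [0, 0, -1]]. \<not> respects_sums 3 a b ((!) c)"
    using not_respects_sums_if_rigid[OF assms(2), of 1] not_respects_sums_if_rigid[OF assms(2), of 2]
    by simp
  with assms(1) show ?thesis
    unfolding sorted_segments_def respects_sums_def by (simp add: numeral_eq_Suc All_less_Suc) smt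
qed

lemma rigid_segments_diameter_le_4:
  assumes "sorted_segments 4 a b" and "rigid_segments 4 a b"
  shows "b 3 - a 0 \<le> 8 * (\<Sum>j<4. b j - a j)"
proof -
  have "\<forall>c\<in>set [[0, -2, -3, -4], [0, -2, -1, -2], [0, -2, -1, 0], [0, -1, -2, -4],
      [0, -1, -2, -3], [0, -1, -2, -2], [0, -1, -2, -1], [0, -1, -2, 0], [0, -1, -1, -2],
      [0, -1, -1, -1], [0, -1, -1, 0], [0, -1, 0, -2], [0, -1, 0, -1], [0, -1, 0, 0],
      [0, -1, 0, 1], [0, -1, 1, 0], [0, 0, -1, -2], [0, 0, -1, -1], [0, 0, -1, 0], [0, 0, 0, -1]].
      \<not> respects_sums 4 a b ((!) c)"
    using not_respects_sums_if_rigid[OF assms(2), of 1] not_respects_sums_if_rigid[OF assms(2), of 2]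
      not_respects_sums_if_rigid[OF assms(2), of 3]
    by simp
  with assms(1) show ?thesis
    unfolding sorted_segments_def respects_sums_def by (simp add: numeral_eq_Suc All_less_Suc) smt
qed

lemma rigid_segments_diameter_le:
  assumes "sorted_segments s a b" and "rigid_segments s a b" and "0 < s" and "s \<le> 4"
  shows "b (s - 1) - a 0 \<le> 2 ^ (s - 1) * (\<Sum>j<s. b j - a j)"
proof -
  consider "s = 1" | "s = 2" | "s = 3" | "s = 4" using assms(3,4) by linarith
  then show ?thesis
  proof cases
    case 1
    then show ?thesis by simp
  next
    case 2
    then show ?thesis using rigid_segments_diameter_le_2 assms(1,2) by simp
  next
    case 3
    then show ?thesis using rigid_segments_diameter_le_3 assms(1,2) by simp
  next
    case 4
    then show ?thesis using rigid_segments_diameter_le_4 assms(1,2) by simp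
  qed
qed

theorem proposition1p4:
  fixes A :: "int set" and s :: nat
  assumes "finite A"
    and "fdim A = 1"
    and "s = seg_num A"
    and "s \<le> 4"
    and "s \<le> card A - 1"
  shows "fvol A \<le> 2 ^ (s - 1) * (card A - s) + 1"
proof -
  obtain a b where seg: "sorted_segments s a b" and A: "A = (\<Union>j<s. {a j..b j})"
    by (rule seg_num_decomposition[OF \<open>finite A\<close>, folded \<open>s = seg_num A\<close>])
  show ?thesis
  proof (cases "s = 0")
    case True
    then have "fvol A \<le> nat (0 - 0 + 1)" using A fvol_le_diameter[OF \<open>fdim A = 1\<close>, of 0 0] by simp
    with True show ?thesis by simp
  next
    case False
    then have "s < card A" using \<open>s \<le> card A - 1\<close> by linarith
    then have "rigid_segments s a b" using rigid_if_fdim_one[OF seg] \<open>fdim A = 1\<close> A by simp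
    then have diam: "b (s - 1) - a 0 \<le> 2 ^ (s - 1) * int (card A - s)"
      using rigid_segments_diameter_le[OF seg] card_sorted_segments[OF seg] A False \<open>s \<le> 4\<close>
        \<open>s < card A\<close> by (simp add: of_nat_diff)
    have "A \<subseteq> {a 0..b (s - 1)}" using sorted_segments_subset[OF seg] A by simp
    then have "fvol A \<le> nat (b (s - 1) - a 0 + 1)" by (rule fvol_le_diameter[OF \<open>fdim A = 1\<close>])
    also have "\<dots> \<le> 2 ^ (s - 1) * (card A - s) + 1" using diam by (simp add: nat_le_iff)
    finally show ?thesis .
  qed
qed

end
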